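(* For each $n\ge1$ let $f_n:\{1,\dots,n\}^2\to[0,\infty)$ be non-decreasing in each of its two arguments separately. Suppose that $\liminf_{n\to\infty}f_n(p_n,q_n)>0$ for every sequence $\{(p_n,q_n)\}$ with $(p_n,q_n)\in\{1,\dots,n\}^2$ satisfying either of the following: (i) $q_n\equiv1$ and $\lim_{n\to\infty}p_n/n$ exists and lies in $(0,1)$; (ii) $\lim_{n\to\infty}q_n=\infty$ and $\lim_{n\to\infty}p_nq_n^2/n$ exists and lies in $(0,\infty)$. Then $\liminf_{n\to\infty}f_n(p_n,q_n)>0$ for every sequence $\{(p_n,q_n)\}$ with $1\le p_n,q_n\le n$ such that $\lim_{n\to\infty}p_nq_n^2/n$ exists and lies in $(0,\infty)$. *)

theory Defs
  imports "HOL-Analysis.Analysis"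
begin

definition admissible_seq :: "(nat \<Rightarrow> nat) \<Rightarrow> (nat \<Rightarrow> nat) \<Rightarrow> bool" where
  "admissible_seq p q \<longleftrightarrow> (\<forall>n\<ge>1. 1 \<le> p n \<and> p n \<le> n \<and> 1 \<le> q n \<and> q n \<le> n)"

definition liminf_pos :: "(nat \<Rightarrow> nat \<Rightarrow> nat \<Rightarrow> real) \<Rightarrow> (nat \<Rightarrow> nat) \<Rightarrow> (nat \<Rightarrow> nat) \<Rightarrow> bool" where
  "liminf_pos f p q \<longleftrightarrow> liminf (\<lambda>n. ereal (f n (p n) (q n))) > 0"

end

theory Submission imports Defs "HOL-Real_Asymp.Real_Asymp" begin

text \<open>Split an arbitrary sequence into the indices where \<open>q\<^sub>n\<close> stays bounded and those where it
tends to infinity. On the first part \<open>q\<^sub>n\<^sup>2 = O(1)\<close>, so \<open>p\<^sub>n \<ge> a n\<close> for some \<open>0 < a < 1\<close>, and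
monotonicity compares \<open>f\<^sub>n(p\<^sub>n,q\<^sub>n)\<close> with \<open>f\<^sub>n(\<lceil>a n\<rceil>,1)\<close>, covered by case (i). On the second part
the sequence is extended by \<open>(1, \<lceil>\<surd>(L n)\<rceil>)\<close> to a sequence satisfying (ii). A diagonal argument
shows that these two kinds of lower bounds combine to a uniform one.\<close>

lemma Liminf_ereal_pos_iff:
  fixes X :: "'a \<Rightarrow> real"
  shows "0 < Liminf F (\<lambda>x. ereal (X x)) \<longleftrightarrow> (\<exists>c>0. \<forall>\<^sub>F x in F. c \<le> X x)"
proof
  assume "0 < Liminf F (\<lambda>x. ereal (X x))"
  then obtain c where "0 < ereal c" "ereal c < Liminf F (\<lambda>x. ereal (X x))"
    using ereal_dense2 by blast
  then show "\<exists>c>0. \<forall>\<^sub>F x in F. c \<le> X x"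
    by (auto dest!: less_LiminfD elim!: eventually_mono)
next
  assume "\<exists>c>0. \<forall>\<^sub>F x in F. c \<le> X x"
  then obtain c where "c > 0" "\<forall>\<^sub>F x in F. ereal c \<le> ereal (X x)"
    by auto
  then show "0 < Liminf F (\<lambda>x. ereal (X x))"
    using Liminf_bounded by (metis ereal_less(2) order_less_le_trans)
qed

lemma liminf_pos_iff:
  "liminf_pos f p q \<longleftrightarrow> (\<exists>c>0. \<forall>\<^sub>F n in sequentially. c \<le> f n (p n) (q n))"
  unfolding liminf_pos_def by (rule Liminf_ereal_pos_iff)

lemma eventually_pos_lower_bound_by_splitting:
  fixes F :: "nat \<Rightarrow> real" and q :: "nat \<Rightarrow> nat"
  assumes bounded: "\<And>Q. \<exists>c>0. \<forall>\<^sub>F n in sequentially. q n \<le> Q \<longrightarrow> c \<le> F n"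
    and unbounded: "\<And>R. filterlim q at_top (inf sequentially (principal R)) \<Longrightarrow>
                      \<exists>c>0. \<forall>\<^sub>F n in sequentially. n \<in> R \<longrightarrow> c \<le> F n"
  shows "\<exists>c>0. \<forall>\<^sub>F n in sequentially. c \<le> F n"
proof (rule ccontr)
  assume no_bound: "\<not> ?thesis"
  have "\<exists>n\<ge>k. F n < inverse (real (Suc k)) \<and> k < q n" for k
  proof -
    obtain c where "c > 0" and c: "\<forall>\<^sub>F n in sequentially. q n \<le> k \<longrightarrow> c \<le> F n"
      using bounded by blast
    have "0 < min c (inverse (real (Suc k)))"
      using \<open>c > 0\<close> by simp
    then have "\<not> (\<forall>\<^sub>F n in sequentially. min c (inverse (real (Suc k))) \<le> F n)"
      using no_bound by blast
    then have "\<exists>\<^sub>F n in sequentially. F n < min c (inverse (real (Suc k)))"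
      unfolding frequently_def not_less .
    then have "\<exists>\<^sub>F n in sequentially. (q n \<le> k \<longrightarrow> c \<le> F n) \<and> F n < min c (inverse (real (Suc k)))"
      using c by (rule frequently_eventually_conj)
    then show ?thesis
      unfolding frequently_sequentially by (metis min_less_iff_conj not_le order.strict_trans2)
  qed
  then obtain r where r: "\<And>k. k \<le> r k \<and> F (r k) < inverse (real (Suc k)) \<and> k < q (r k)"
    by metis
  have "filterlim q at_top (inf sequentially (principal (range r)))"
    unfolding filterlim_at_top eventually_inf_principal eventually_sequentially
  proof
    fix Z
    obtain N where N: "r ` {..<Z} \<subseteq> {..<N}"
      using finite_nat_bounded by blast
    have "Z \<le> q (r k)" if "N \<le> r k" for k
      using N r[of k] that by (cases "k < Z") auto
    then show "\<exists>N. \<forall>n\<ge>N. n \<in> range r \<longrightarrow> Z \<le> q n"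
      by blast
  qed
  then obtain c N where "c > 0" and c: "\<And>n. N \<le> n \<Longrightarrow> n \<in> range r \<Longrightarrow> c \<le> F n"
    using unbounded unfolding eventually_sequentially by blast
  obtain k where k: "inverse (real (Suc k)) < c"
    using reals_Archimedean[OF \<open>c > 0\<close>] by blast
  define m where "m = max k N"
  have "c \<le> F (r m)"
    using c r[of m] by (simp add: m_def)
  also have "\<dots> < inverse (real (Suc m))"
    using r by blast
  also have "\<dots> \<le> inverse (real (Suc k))"
    by (simp add: m_def)
  finally show False
    using k by simp
qed

lemma nat_ceiling_bounds:
  fixes x :: real
  assumes "0 \<le> x"
  shows "x \<le> real (nat \<lceil>x\<rceil>)" and "real (nat \<lceil>x\<rceil>) < x + 1"
  using assms by (simp_all add: of_nat_nat) linarith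

lemma tendsto_ceiling_mult_div:
  fixes a :: real
  assumes "0 \<le> a"
  shows "(\<lambda>n. real (nat \<lceil>a * real n\<rceil>) / real n) \<longlonglongrightarrow> a"
proof (rule tendsto_sandwich[of "\<lambda>_. a" _ _ "\<lambda>n. a + 1 / real n"])
  have ceiling: "a * real n \<le> real (nat \<lceil>a * real n\<rceil>)" "real (nat \<lceil>a * real n\<rceil>) \<le> a * real n + 1"
    for n
    using nat_ceiling_bounds[of "a * real n"] assms by simp_all
  show "\<forall>\<^sub>F n in sequentially. a \<le> real (nat \<lceil>a * real n\<rceil>) / real n"
    using eventually_gt_at_top[of 0]
    by eventually_elim (simp add: pos_le_divide_eq ceiling(1))
  show "\<forall>\<^sub>F n in sequentially. real (nat \<lceil>a * real n\<rceil>) / real n \<le> a + 1 / real n"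
    using eventually_gt_at_top[of 0]
  proof eventually_elim
    case (elim n)
    have "real (nat \<lceil>a * real n\<rceil>) / real n \<le> (a * real n + 1) / real n"
      using ceiling(2) by (rule divide_right_mono) simp
    also have "\<dots> = a + 1 / real n"
      using elim by (simp add: add_divide_distrib)
    finally show ?case .
  qed
  show "(\<lambda>n. a + 1 / real n) \<longlonglongrightarrow> a"
    by real_asymp
qed simp

lemma seq_with_square_div_tendsto:
  fixes L :: real
  assumes "0 < L"
  obtains s :: "nat \<Rightarrow> nat"
  where "\<And>n. 1 \<le> n \<Longrightarrow> 1 \<le> s n \<and> s n \<le> n"
    and "filterlim s at_top sequentially"
    and "(\<lambda>n. real (s n) ^ 2 / real n) \<longlonglongrightarrow> L"
proof
  define s where "s n = min n (nat \<lceil>sqrt (L * real n)\<rceil>)" for n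
  show "1 \<le> s n \<and> s n \<le> n" if "1 \<le> n" for n
    using assms that by (simp add: s_def Suc_le_eq zero_less_nat_eq)
  have "\<forall>\<^sub>F n in sequentially. sqrt (L * real n) \<le> real n"
    using assms by real_asymp
  with eventually_gt_at_top[of 0]
  have bounds: "\<forall>\<^sub>F n in sequentially.
      0 < n \<and> sqrt (L * real n) \<le> real (s n) \<and> real (s n) \<le> sqrt (L * real n) + 1"
  proof eventually_elim
    case (elim n)
    then have "s n = nat \<lceil>sqrt (L * real n)\<rceil>"
      by (simp add: s_def nat_le_iff ceiling_le_iff)
    then show ?case
      using elim nat_ceiling_bounds[of "sqrt (L * real n)"] assms by simp
  qed
  have "filterlim (\<lambda>n. sqrt (L * real n)) at_top sequentially"
    using assms by real_asymp
  then show "filterlim s at_top sequentially"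
    unfolding filterlim_at_top
  proof (intro allI)
    fix Z :: nat
    assume "\<forall>Z. \<forall>\<^sub>F n in sequentially. Z \<le> sqrt (L * real n)"
    then have "\<forall>\<^sub>F n in sequentially. real Z \<le> sqrt (L * real n)"
      by blast
    with bounds show "\<forall>\<^sub>F n in sequentially. Z \<le> s n"
      by eventually_elim (meson of_nat_le_iff order.trans)
  qed
  show "(\<lambda>n. real (s n) ^ 2 / real n) \<longlonglongrightarrow> L"
  proof (rule tendsto_sandwich[of "\<lambda>_. L" _ _ "\<lambda>n. L + (2 * sqrt (L * real n) + 1) / real n"])
    show "\<forall>\<^sub>F n in sequentially. L \<le> real (s n) ^ 2 / real n"
      using bounds
    proof eventually_elim
      case (elim n)
      then have "L * real n \<le> real (s n) ^ 2"
        using power_mono[of "sqrt (L * real n)" "real (s n)" 2] assms by simp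
      then show ?case
        using elim by (simp add: pos_le_divide_eq)
    qed
    show "\<forall>\<^sub>F n in sequentially. real (s n) ^ 2 / real n \<le> L + (2 * sqrt (L * real n) + 1) / real n"
      using bounds
    proof eventually_elim
      case (elim n)
      then have "real (s n) ^ 2 \<le> (sqrt (L * real n) + 1) ^ 2"
        by (intro power_mono) auto
      also have "\<dots> = L * real n + (2 * sqrt (L * real n) + 1)"
        using assms by (simp add: power2_sum)
      finally show ?case
        using elim by (simp add: divide_le_eq add_divide_distrib algebra_simps)
    qed
    show "(\<lambda>n. L + (2 * sqrt (L * real n) + 1) / real n) \<longlonglongrightarrow> L"
      using assms by real_asymp
  qed simp
qed

lemma lower_bound_where_q_bounded:
  fixes f :: "nat \<Rightarrow> nat \<Rightarrow> nat \<Rightarrow> real" and p q :: "nat \<Rightarrow> nat"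
  assumes mono1: "\<And>n p p' q. 1 \<le> n \<Longrightarrow> p \<in> {1..n} \<Longrightarrow> p' \<in> {1..n} \<Longrightarrow> q \<in> {1..n} \<Longrightarrow>
                  p \<le> p' \<Longrightarrow> f n p q \<le> f n p' q"
    and mono2: "\<And>n p q q'. 1 \<le> n \<Longrightarrow> p \<in> {1..n} \<Longrightarrow> q \<in> {1..n} \<Longrightarrow> q' \<in> {1..n} \<Longrightarrow>
                  q \<le> q' \<Longrightarrow> f n p q \<le> f n p q'"
    and case_i: "\<And>p q. admissible_seq p q \<Longrightarrow> (\<forall>n\<ge>1. q n = 1) \<Longrightarrow>
                  (\<exists>L. (\<lambda>n. real (p n) / real n) \<longlonglongrightarrow> L \<and> 0 < L \<and> L < 1) \<Longrightarrow>
                  liminf_pos f p q"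
    and adm: "admissible_seq p q"
    and lim: "(\<lambda>n. real (p n) * real (q n) ^ 2 / real n) \<longlonglongrightarrow> L" and "0 < L"
  shows "\<exists>c>0. \<forall>\<^sub>F n in sequentially. q n \<le> Q \<longrightarrow> c \<le> f n (p n) (q n)"
proof -
  define a where "a = min (1 / 2) (L / (2 * (1 + real Q ^ 2)))"
  have Q: "0 < 1 + real Q ^ 2"
    by (simp add: add_pos_nonneg)
  have "a \<le> L / 2 / (1 + real Q ^ 2)"
    by (simp add: a_def)
  then have a: "0 < a" "a < 1" "a * (1 + real Q ^ 2) \<le> L / 2"
    using \<open>0 < L\<close> Q by (auto simp: a_def pos_le_divide_eq simp del: divide_divide_eq_left)
  define A where "A n = nat \<lceil>a * real n\<rceil>" for n
  have admA: "admissible_seq A (\<lambda>_. 1)"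
    unfolding admissible_seq_def
  proof (intro allI impI conjI)
    fix n :: nat
    assume "1 \<le> n"
    then show "1 \<le> A n"
      using \<open>0 < a\<close> by (simp add: A_def Suc_le_eq zero_less_nat_eq)
    have "a * real n \<le> real n"
      using a by (intro mult_left_le_one_le) auto
    then show "A n \<le> n"
      by (simp add: A_def nat_le_iff ceiling_le_iff)
  qed simp_all
  have "(\<lambda>n. real (A n) / real n) \<longlonglongrightarrow> a"
    unfolding A_def using a by (intro tendsto_ceiling_mult_div) simp
  then have "liminf_pos f A (\<lambda>_. 1)"
    by (intro case_i[OF admA]) (use a in auto)
  then obtain c where "c > 0" and c: "\<forall>\<^sub>F n in sequentially. c \<le> f n (A n) 1"
    by (auto simp: liminf_pos_iff)
  have half: "\<forall>\<^sub>F n in sequentially. L / 2 < real (p n) * real (q n) ^ 2 / real n"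
    using lim \<open>0 < L\<close> by (intro order_tendstoD(1)) auto
  from c half eventually_ge_at_top[of 1]
  have "\<forall>\<^sub>F n in sequentially. q n \<le> Q \<longrightarrow> c \<le> f n (p n) (q n)"
  proof eventually_elim
    case (elim n)
    have pq: "p n \<in> {1..n}" "q n \<in> {1..n}" "A n \<in> {1..n}"
      using adm admA elim(3) by (auto simp: admissible_seq_def)
    show ?case
    proof
      assume "q n \<le> Q"
      have "a * real n * (1 + real Q ^ 2) = a * (1 + real Q ^ 2) * real n"
        by (simp only: ac_simps)
      also have "\<dots> \<le> L / 2 * real n"
        using a(3) by (rule mult_right_mono) simp
      also have "\<dots> < real (p n) * real (q n) ^ 2"
        using elim(2,3) by (simp add: less_divide_eq)
      also have "\<dots> \<le> real (p n) * (1 + real Q ^ 2)"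
      proof -
        have "real (q n) ^ 2 \<le> real Q ^ 2"
          using \<open>q n \<le> Q\<close> by (intro power_mono) simp_all
        then have "real (q n) ^ 2 \<le> 1 + real Q ^ 2"
          by linarith
        then show ?thesis
          by (rule mult_left_mono) simp
      qed
      finally have "a * real n < real (p n)"
        by (simp add: add_pos_nonneg mult_less_cancel_right)
      then have "A n \<le> p n"
        by (simp add: A_def nat_le_iff ceiling_le_iff)
      have "c \<le> f n (A n) 1"
        using elim(1) .
      also have "\<dots> \<le> f n (p n) 1"
        using pq elim(3) \<open>A n \<le> p n\<close> by (intro mono1) auto
      also have "\<dots> \<le> f n (p n) (q n)"
        using pq elim(3) by (intro mono2) auto
      finally show "c \<le> f n (p n) (q n)" .
    qed
  qed
  with \<open>c > 0\<close> show ?thesis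
    by blast
qed

lemma lower_bound_where_q_unbounded:
  fixes f :: "nat \<Rightarrow> nat \<Rightarrow> nat \<Rightarrow> real" and p q :: "nat \<Rightarrow> nat"
  assumes case_ii: "\<And>p q. admissible_seq p q \<Longrightarrow> filterlim q at_top sequentially \<Longrightarrow>
                  (\<exists>L. (\<lambda>n. real (p n) * real (q n) ^ 2 / real n) \<longlonglongrightarrow> L \<and> 0 < L) \<Longrightarrow>
                  liminf_pos f p q"
    and adm: "admissible_seq p q"
    and lim: "(\<lambda>n. real (p n) * real (q n) ^ 2 / real n) \<longlonglongrightarrow> L" and "0 < L"
    and q_unbounded: "filterlim q at_top (inf sequentially (principal R))"
  shows "\<exists>c>0. \<forall>\<^sub>F n in sequentially. n \<in> R \<longrightarrow> c \<le> f n (p n) (q n)"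
proof -
  obtain s where s_adm: "\<And>n. 1 \<le> n \<Longrightarrow> 1 \<le> s n \<and> s n \<le> n"
    and s_top: "filterlim s at_top sequentially"
    and s_lim: "(\<lambda>n. real (s n) ^ 2 / real n) \<longlonglongrightarrow> L"
    using seq_with_square_div_tendsto[OF \<open>0 < L\<close>] by blast
  define p' where "p' n = (if n \<in> R then p n else 1)" for n
  define q' where "q' n = (if n \<in> R then q n else s n)" for n
  have "admissible_seq p' q'"
    using adm s_adm by (auto simp: admissible_seq_def p'_def q'_def)
  moreover have "filterlim q' at_top sequentially"
    unfolding q'_def
  proof (rule filterlim_If)
    show "filterlim q at_top (inf sequentially (principal {n. n \<in> R}))"
      using q_unbounded by simp
    show "filterlim s at_top (inf sequentially (principal {n. n \<notin> R}))"
      using s_top by (rule filterlim_mono) simp_all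
  qed
  moreover have "(\<lambda>n. real (p' n) * real (q' n) ^ 2 / real n) \<longlonglongrightarrow> L"
  proof -
    have "(\<lambda>n. if n \<in> R then real (p n) * real (q n) ^ 2 / real n else real (s n) ^ 2 / real n)
          \<longlonglongrightarrow> L"
      by (intro filterlim_If filterlim_mono[OF lim] filterlim_mono[OF s_lim]) simp_all
    moreover have "(\<lambda>n. real (p' n) * real (q' n) ^ 2 / real n) =
          (\<lambda>n. if n \<in> R then real (p n) * real (q n) ^ 2 / real n else real (s n) ^ 2 / real n)"
      by (simp add: fun_eq_iff p'_def q'_def)
    ultimately show ?thesis
      by simp
  qed
  ultimately have "liminf_pos f p' q'"
    using \<open>0 < L\<close> by (intro case_ii) auto
  then obtain c where "c > 0" and "\<forall>\<^sub>F n in sequentially. c \<le> f n (p' n) (q' n)"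
    by (auto simp: liminf_pos_iff)
  then show ?thesis
    by (auto simp: p'_def q'_def elim!: eventually_mono)
qed

theorem lemma3p6:
  fixes f :: "nat \<Rightarrow> nat \<Rightarrow> nat \<Rightarrow> real"
  assumes nonneg: "\<And>n p q. 1 \<le> n \<Longrightarrow> p \<in> {1..n} \<Longrightarrow> q \<in> {1..n} \<Longrightarrow> f n p q \<ge> 0"
    and mono1: "\<And>n p p' q. 1 \<le> n \<Longrightarrow> p \<in> {1..n} \<Longrightarrow> p' \<in> {1..n} \<Longrightarrow> q \<in> {1..n} \<Longrightarrow>
                  p \<le> p' \<Longrightarrow> f n p q \<le> f n p' q"
    and mono2: "\<And>n p q q'. 1 \<le> n \<Longrightarrow> p \<in> {1..n} \<Longrightarrow> q \<in> {1..n} \<Longrightarrow> q' \<in> {1..n} \<Longrightarrow>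
                  q \<le> q' \<Longrightarrow> f n p q \<le> f n p q'"
    and case_i: "\<And>p q. admissible_seq p q \<Longrightarrow> (\<forall>n\<ge>1. q n = 1) \<Longrightarrow>
                  (\<exists>L. (\<lambda>n. real (p n) / real n) \<longlonglongrightarrow> L \<and> 0 < L \<and> L < 1) \<Longrightarrow>
                  liminf_pos f p q"
    and case_ii: "\<And>p q. admissible_seq p q \<Longrightarrow> filterlim q at_top sequentially \<Longrightarrow>
                  (\<exists>L. (\<lambda>n. real (p n) * real (q n) ^ 2 / real n) \<longlonglongrightarrow> L \<and> 0 < L) \<Longrightarrow>
                  liminf_pos f p q"
  shows "\<And>p q. admissible_seq p q \<Longrightarrow>
           (\<exists>L. (\<lambda>n. real (p n) * real (q n) ^ 2 / real n) \<longlonglongrightarrow> L \<and> 0 < L) \<Longrightarrow>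
           liminf_pos f p q"
proof -
  fix p q :: "nat \<Rightarrow> nat"
  assume adm: "admissible_seq p q"
    and "\<exists>L. (\<lambda>n. real (p n) * real (q n) ^ 2 / real n) \<longlonglongrightarrow> L \<and> 0 < L"
  then obtain L where lim: "(\<lambda>n. real (p n) * real (q n) ^ 2 / real n) \<longlonglongrightarrow> L" and "0 < L"
    by blast
  have "\<exists>c>0. \<forall>\<^sub>F n in sequentially. c \<le> f n (p n) (q n)"
  proof (rule eventually_pos_lower_bound_by_splitting)
    show "\<exists>c>0. \<forall>\<^sub>F n in sequentially. q n \<le> Q \<longrightarrow> c \<le> f n (p n) (q n)" for Q
      using mono1 mono2 case_i adm lim \<open>0 < L\<close> by (rule lower_bound_where_q_bounded)
    show "\<exists>c>0. \<forall>\<^sub>F n in sequentially. n \<in> R \<longrightarrow> c \<le> f n (p n) (q n)"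
      if "filterlim q at_top (inf sequentially (principal R))" for R
      using case_ii adm lim \<open>0 < L\<close> that by (rule lower_bound_where_q_unbounded)
  qed
  then show "liminf_pos f p q"
    by (simp add: liminf_pos_iff)
qed

end
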